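(* Let $\mathbf A$ be a super-paraorthomodular lattice and let $x,y\in\mathrm{Sh}(\mathbf A)$. Then the subalgebra $\mathbf{Sg}(x,y)$ of $\mathbf A$ generated by $x,y$ is distributive if and only if $x$ and $y$ commute in the orthomodular poset $\mathbf{Sh}(\mathbf A)$. In particular (in this case), $\mathbf{Sg}(x,y)$ is a Boolean subalgebra of $\mathbf A$.
   Context: A pseudo-Kleene lattice is an algebra $(A,\land,\lor,{}',0,1)$ that is a bounded lattice with an antitone involution ${}'$ ($x\leq y\Rightarrow y'\leq x'$, $x''=x$) satisfying $x\land x'\leq y\lor y'$. It is super-paraorthomodular if for all $x,y$: (SP1) $x\leq y$ and $x'\land y=(x\land x')\lor(y\land y')$ imply $y\land(x\lor x')=x\lor(y\land y')$; (SP2) $x\leq y$ implies $(x\land x')\lor(y\land y')=(x'\land y)\land(x'\land y)'$. $\mathrm{Sh}(\mathbf A)=\{a\in A:a\land a'=0\}$ and $\mathbf{Sh}(\mathbf A)=(\mathrm{Sh}(\mathbf A),\leq,{}',0,1)$ with inherited order and involution (it is an orthomodular poset). In $\mathbf{Sh}(\mathbf A)$, $x$ and $y$ commute if the meets $x\land y$ and $x\land y'$ exist in $\mathbf{Sh}(\mathbf A)$ and $x=(x\land y)\lor(x\land y')$ there. A Boolean subalgebra is a subalgebra which is a distributive lattice in which $u\land u'=0$ for every element $u$. *)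

theory Defs
  imports Main
begin

text \<open>An algebra (A, inf, sup, c, bot, top) is represented by a type 'a of class
bounded_lattice together with the unary operation c (the involution ').\<close>

definition pseudo_kleene :: "('a::bounded_lattice \<Rightarrow> 'a) \<Rightarrow> bool" where
  "pseudo_kleene c \<longleftrightarrow>
     (\<forall>x y. x \<le> y \<longrightarrow> c y \<le> c x) \<and>
     (\<forall>x. c (c x) = x) \<and>
     (\<forall>x y. inf x (c x) \<le> sup y (c y))"

definition super_paraorthomodular :: "('a::bounded_lattice \<Rightarrow> 'a) \<Rightarrow> bool" where
  "super_paraorthomodular c \<longleftrightarrow> pseudo_kleene c \<and>
     (\<forall>x y. x \<le> y \<and> inf (c x) y = sup (inf x (c x)) (inf y (c y))
        \<longrightarrow> inf y (sup x (c x)) = sup x (inf y (c y))) \<and>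
     (\<forall>x y. x \<le> y \<longrightarrow>
        sup (inf x (c x)) (inf y (c y)) = inf (inf (c x) y) (c (inf (c x) y)))"

definition Sh :: "('a::bounded_lattice \<Rightarrow> 'a) \<Rightarrow> 'a set" where
  "Sh c = {a. inf a (c a) = bot}"

definition is_meet_in :: "'a::order set \<Rightarrow> 'a \<Rightarrow> 'a \<Rightarrow> 'a \<Rightarrow> bool" where
  "is_meet_in S a b m \<longleftrightarrow> m \<in> S \<and> m \<le> a \<and> m \<le> b \<and>
     (\<forall>z\<in>S. z \<le> a \<and> z \<le> b \<longrightarrow> z \<le> m)"

definition is_join_in :: "'a::order set \<Rightarrow> 'a \<Rightarrow> 'a \<Rightarrow> 'a \<Rightarrow> bool" where
  "is_join_in S a b j \<longleftrightarrow> j \<in> S \<and> a \<le> j \<and> b \<le> j \<and>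
     (\<forall>z\<in>S. a \<le> z \<and> b \<le> z \<longrightarrow> j \<le> z)"

definition commute_Sh :: "('a::bounded_lattice \<Rightarrow> 'a) \<Rightarrow> 'a \<Rightarrow> 'a \<Rightarrow> bool" where
  "commute_Sh c x y \<longleftrightarrow> (\<exists>m1 m2. is_meet_in (Sh c) x y m1 \<and>
      is_meet_in (Sh c) x (c y) m2 \<and> is_join_in (Sh c) m1 m2 x)"

inductive_set Sg :: "('a::bounded_lattice \<Rightarrow> 'a) \<Rightarrow> 'a set \<Rightarrow> 'a set"
  for c :: "'a \<Rightarrow> 'a" and X :: "'a set" where
  gen: "a \<in> X \<Longrightarrow> a \<in> Sg c X"
| bot: "bot \<in> Sg c X"
| top: "top \<in> Sg c X"
| inf: "a \<in> Sg c X \<Longrightarrow> b \<in> Sg c X \<Longrightarrow> inf a b \<in> Sg c X"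
| sup: "a \<in> Sg c X \<Longrightarrow> b \<in> Sg c X \<Longrightarrow> sup a b \<in> Sg c X"
| cmp: "a \<in> Sg c X \<Longrightarrow> c a \<in> Sg c X"

definition subalgebra :: "('a::bounded_lattice \<Rightarrow> 'a) \<Rightarrow> 'a set \<Rightarrow> bool" where
  "subalgebra c S \<longleftrightarrow> bot \<in> S \<and> top \<in> S \<and>
     (\<forall>a\<in>S. \<forall>b\<in>S. inf a b \<in> S \<and> sup a b \<in> S) \<and> (\<forall>a\<in>S. c a \<in> S)"

definition distributive_on :: "'a::lattice set \<Rightarrow> bool" where
  "distributive_on S \<longleftrightarrow>
     (\<forall>a\<in>S. \<forall>b\<in>S. \<forall>d\<in>S. inf a (sup b d) = sup (inf a b) (inf a d))"

definition boolean_subalgebra :: "('a::bounded_lattice \<Rightarrow> 'a) \<Rightarrow> 'a set \<Rightarrow> bool" where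
  "boolean_subalgebra c S \<longleftrightarrow> subalgebra c S \<and> distributive_on S \<and>
     (\<forall>u\<in>S. inf u (c u) = bot)"

end

theory Submission
  imports Defs
begin

(* On sharp elements a super-paraorthomodular lattice behaves like an orthomodular
   lattice: relative complements v \<and> u' (u \<le> v) and joins of orthogonal elements are
   sharp, and u \<le> v with u' \<and> v = 0 forces u = v.  Hence if x and y commute in Sh(A),
   their meets in Sh(A) are the lattice meets x \<and> y and x \<and> y', commutation is
   symmetric and passes to complements, and the four elements x \<and> y, x \<and> y', x' \<and> y,
   x' \<and> y' form an orthogonal decomposition of 1 into sharp elements.  The joins of
   subsets of such a decomposition form a Boolean subalgebra (the complement of a join
   is the join of the remaining elements, again by orthomodularity) containing x and y,
   hence Sg(x, y).  Conversely, distributivity of Sg(x, y) directly makes x \<and> y and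
   x \<and> y' sharp with join x. *)

lemma distributive_on_subset:
  "distributive_on S \<Longrightarrow> T \<subseteq> S \<Longrightarrow> distributive_on T"
  unfolding distributive_on_def by blast

lemma subalgebra_Sg: "subalgebra c (Sg c X)"
  unfolding subalgebra_def by (simp add: Sg.bot Sg.top Sg.inf Sg.sup Sg.cmp)

lemma Sg_minimal:
  assumes "subalgebra c S" and "X \<subseteq> S"
  shows "Sg c X \<subseteq> S"
proof
  fix u assume "u \<in> Sg c X"
  then show "u \<in> S"
    by induction (use assms in \<open>auto simp: subalgebra_def\<close>)
qed

lemma boolean_subalgebra_subset:
  assumes "boolean_subalgebra c S" and "subalgebra c T" and "T \<subseteq> S"
  shows "boolean_subalgebra c T"
  using assms distributive_on_subset unfolding boolean_subalgebra_def by blast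

lemma commute_ShI:
  assumes "x \<in> Sh c" "inf x y \<in> Sh c" "inf x (c y) \<in> Sh c"
    and "x = sup (inf x y) (inf x (c y))"
  shows "commute_Sh c x y"
proof -
  have "is_meet_in (Sh c) x y (inf x y)" "is_meet_in (Sh c) x (c y) (inf x (c y))"
    using assms unfolding is_meet_in_def by simp_all
  moreover have "is_join_in (Sh c) (inf x y) (inf x (c y)) x"
    using assms unfolding is_join_in_def by (metis sup_ge1 sup_ge2 sup_least)
  ultimately show ?thesis unfolding commute_Sh_def by blast
qed

locale pseudo_kleene_lattice =
  fixes c :: "'a::bounded_lattice \<Rightarrow> 'a"
  assumes pseudo_kleene: "pseudo_kleene c"
begin

lemma compl_antimono: "x \<le> y \<Longrightarrow> c y \<le> c x"
  using pseudo_kleene unfolding pseudo_kleene_def by blast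

lemma compl_compl [simp]: "c (c x) = x"
  using pseudo_kleene unfolding pseudo_kleene_def by blast

lemma compl_le_compl_iff [simp]: "c x \<le> c y \<longleftrightarrow> y \<le> x"
  by (metis compl_antimono compl_compl)

lemma le_compl_iff_le_compl: "x \<le> c y \<longleftrightarrow> y \<le> c x"
  by (metis compl_le_compl_iff compl_compl)

lemma compl_sup [simp]: "c (sup x y) = inf (c x) (c y)"
proof (rule antisym)
  show "c (sup x y) \<le> inf (c x) (c y)" by (simp add: compl_antimono)
  have "sup x y \<le> c (inf (c x) (c y))"
    by (metis le_compl_iff_le_compl inf_le1 inf_le2 sup_least)
  then show "inf (c x) (c y) \<le> c (sup x y)"
    using le_compl_iff_le_compl by blast
qed

lemma compl_inf [simp]: "c (inf x y) = sup (c x) (c y)"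
  by (metis compl_sup compl_compl)

lemma compl_bot [simp]: "c bot = top"
  by (metis le_compl_iff_le_compl bot_least top_unique)

lemma compl_top [simp]: "c top = bot"
  by (metis compl_bot compl_compl)

lemma Sh_compl: "u \<in> Sh c \<Longrightarrow> c u \<in> Sh c"
  by (simp add: Sh_def inf_commute)

lemma sup_compl_Sh:
  assumes "u \<in> Sh c"
  shows "sup u (c u) = top"
proof -
  have "c (sup u (c u)) = bot"
    using assms by (simp add: Sh_def inf_commute)
  then show ?thesis by (metis compl_compl compl_bot)
qed

lemma commute_Sh_of_distributive:
  assumes x: "x \<in> Sh c" and y: "y \<in> Sh c" and distrib: "distributive_on (Sg c {x, y})"
  shows "commute_Sh c x y"
proof -
  have gen: "x \<in> Sg c {x, y}" "y \<in> Sg c {x, y}" "c x \<in> Sg c {x, y}" "c y \<in> Sg c {x, y}"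
    by (auto intro: Sg.gen Sg.cmp)
  then have meets: "inf x y \<in> Sg c {x, y}" "inf x (c y) \<in> Sg c {x, y}"
    by (auto intro: Sg.inf)
  have x0: "inf x (c x) = bot" and y0: "inf y (c y) = bot"
    using x y by (simp_all add: Sh_def)
  have "inf x y \<in> Sh c"
  proof -
    have "inf (inf x y) (c (inf x y)) = sup (inf (inf x y) (c x)) (inf (inf x y) (c y))"
      using distrib meets gen unfolding distributive_on_def by simp
    also have "\<dots> = sup (inf y (inf x (c x))) (inf x (inf y (c y)))" by (simp add: inf_aci)
    finally show ?thesis using x0 y0 by (simp add: Sh_def)
  qed
  moreover have "inf x (c y) \<in> Sh c"
  proof -
    have "inf (inf x (c y)) (c (inf x (c y))) =
        sup (inf (inf x (c y)) (c x)) (inf (inf x (c y)) y)"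
      using distrib meets gen unfolding distributive_on_def by simp
    also have "\<dots> = sup (inf (c y) (inf x (c x))) (inf x (inf y (c y)))" by (simp add: inf_aci)
    finally show ?thesis using x0 y0 by (simp add: Sh_def)
  qed
  moreover have "x = sup (inf x y) (inf x (c y))"
  proof -
    have "inf x (sup y (c y)) = sup (inf x y) (inf x (c y))"
      using distrib gen unfolding distributive_on_def by blast
    then show ?thesis using y by (simp add: sup_compl_Sh)
  qed
  ultimately show ?thesis by (rule commute_ShI[OF x])
qed

end

locale super_paraorthomodular_lattice =
  fixes c :: "'a::bounded_lattice \<Rightarrow> 'a"
  assumes super_paraorthomodular: "super_paraorthomodular c"

sublocale super_paraorthomodular_lattice \<subseteq> pseudo_kleene_lattice
  using super_paraorthomodular by unfold_locales (simp add: super_paraorthomodular_def)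

context super_paraorthomodular_lattice
begin

lemma inf_compl_Sh:
  assumes "u \<in> Sh c" "v \<in> Sh c" "u \<le> v"
  shows "inf v (c u) \<in> Sh c"
proof -
  have "sup (inf u (c u)) (inf v (c v)) = inf (inf (c u) v) (c (inf (c u) v))"
    using super_paraorthomodular \<open>u \<le> v\<close> unfolding super_paraorthomodular_def by blast
  with assms show ?thesis by (simp add: Sh_def inf_commute)
qed

lemma sup_Sh_of_orthogonal:
  assumes "u \<in> Sh c" "v \<in> Sh c" "u \<le> c v"
  shows "sup u v \<in> Sh c"
proof -
  have "v \<le> c u" using assms(3) le_compl_iff_le_compl by blast
  then have "inf (c u) (c v) \<in> Sh c"
    by (rule inf_compl_Sh[OF assms(2) Sh_compl[OF assms(1)]])
  then show ?thesis using Sh_compl by fastforce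
qed

lemma Sh_eq_of_le:
  assumes "u \<in> Sh c" "v \<in> Sh c" "u \<le> v" "inf (c u) v = bot"
  shows "u = v"
proof -
  have "inf v (sup u (c u)) = sup u (inf v (c v))"
    using super_paraorthomodular assms unfolding super_paraorthomodular_def Sh_def by auto
  with assms show ?thesis by (simp add: Sh_def sup_compl_Sh)
qed

lemma orthomodular_law:
  assumes "u \<in> Sh c" "v \<in> Sh c" "u \<le> v"
  shows "v = sup u (inf v (c u))"
proof -
  let ?w = "inf v (c u)"
  have w: "?w \<in> Sh c" by (rule inf_compl_Sh[OF assms])
  have "u \<le> c ?w" using le_compl_iff_le_compl by fastforce
  then have uw: "sup u ?w \<in> Sh c" by (rule sup_Sh_of_orthogonal[OF assms(1) w])
  have "inf (c (sup u ?w)) v = inf ?w (c ?w)" by (simp add: inf_aci)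
  also have "\<dots> = bot" using w by (simp add: Sh_def)
  finally show ?thesis
    using Sh_eq_of_le[OF uw assms(2)] assms(3) by simp
qed

lemma inf_sup_compl_of_orthogonal:
  assumes "u \<in> Sh c" "v \<in> Sh c" "u \<le> c v"
  shows "inf (sup u v) (c v) = u"
proof -
  have uv: "sup u v \<in> Sh c" by (rule sup_Sh_of_orthogonal[OF assms])
  have w: "inf (sup u v) (c v) \<in> Sh c" by (rule inf_compl_Sh[OF assms(2) uv]) simp
  have "inf (c u) (inf (sup u v) (c v)) = inf (sup u v) (c (sup u v))" by (simp add: inf_aci)
  also have "\<dots> = bot" using uv by (simp add: Sh_def)
  finally show ?thesis
    using Sh_eq_of_le[OF assms(1) w] assms(3) by simp
qed

lemma commute_Sh_iff:
  assumes "x \<in> Sh c"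
  shows "commute_Sh c x y \<longleftrightarrow>
    inf x y \<in> Sh c \<and> inf x (c y) \<in> Sh c \<and> x = sup (inf x y) (inf x (c y))"
proof
  assume "commute_Sh c x y"
  then obtain a b where a: "is_meet_in (Sh c) x y a" and b: "is_meet_in (Sh c) x (c y) b"
    and x: "is_join_in (Sh c) a b x"
    unfolding commute_Sh_def by blast
  from a have "a \<in> Sh c" "a \<le> x" "a \<le> y" by (auto simp: is_meet_in_def)
  from b have "b \<in> Sh c" "b \<le> x" "b \<le> c y" by (auto simp: is_meet_in_def)
  have "y \<le> c b" using \<open>b \<le> c y\<close> le_compl_iff_le_compl by blast
  have "a \<le> c b" using \<open>a \<le> y\<close> \<open>y \<le> c b\<close> by (rule order_trans)
  then have "b \<le> c a" using le_compl_iff_le_compl by blast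
  have "sup a b \<in> Sh c"
    by (rule sup_Sh_of_orthogonal) fact+
  with x have "x \<le> sup a b" unfolding is_join_in_def by simp
  with \<open>a \<le> x\<close> \<open>b \<le> x\<close> have x_eq: "x = sup a b" by (simp add: antisym)
  have "a = inf x y"
  proof (rule antisym)
    show "a \<le> inf x y" using \<open>a \<le> x\<close> \<open>a \<le> y\<close> by simp
    have "inf x y \<le> inf x (c b)" using \<open>y \<le> c b\<close> inf_mono by blast
    also have "\<dots> = a" unfolding x_eq by (rule inf_sup_compl_of_orthogonal) fact+
    finally show "inf x y \<le> a" .
  qed
  moreover have "b = inf x (c y)"
  proof (rule antisym)
    show "b \<le> inf x (c y)" using \<open>b \<le> x\<close> \<open>b \<le> c y\<close> by simp
    have "inf x (c y) \<le> inf x (c a)" using \<open>a \<le> y\<close> inf_mono compl_antimono by blast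
    also have "\<dots> = b" unfolding x_eq sup_commute[of a]
      by (rule inf_sup_compl_of_orthogonal) fact+
    finally show "inf x (c y) \<le> b" .
  qed
  ultimately show "inf x y \<in> Sh c \<and> inf x (c y) \<in> Sh c \<and> x = sup (inf x y) (inf x (c y))"
    using \<open>a \<in> Sh c\<close> \<open>b \<in> Sh c\<close> x_eq by blast
next
  assume "inf x y \<in> Sh c \<and> inf x (c y) \<in> Sh c \<and> x = sup (inf x y) (inf x (c y))"
  then show "commute_Sh c x y" using assms by (blast intro: commute_ShI)
qed

lemma commute_Sh_compl:
  assumes "x \<in> Sh c" "commute_Sh c x y"
  shows "commute_Sh c x (c y)"
proof -
  have "inf x y \<in> Sh c \<and> inf x (c y) \<in> Sh c \<and> x = sup (inf x y) (inf x (c y))"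
    using assms commute_Sh_iff by blast
  then show ?thesis
    unfolding commute_Sh_iff[OF assms(1)] compl_compl
    by (metis sup_commute)
qed

lemma commute_Sh_sym:
  assumes "x \<in> Sh c" "y \<in> Sh c" "commute_Sh c x y"
  shows "commute_Sh c y x"
proof -
  let ?a = "inf x y" and ?b = "inf x (c y)"
  have a: "?a \<in> Sh c" and x: "x = sup ?a ?b"
    using assms commute_Sh_iff by blast+
  have "inf y (c ?a) = inf (inf y (c ?b)) (c ?a)"
    by (simp add: inf_absorb1 le_supI2)
  also have "\<dots> = inf y (c (sup ?a ?b))" by (simp add: inf_aci)
  also have "\<dots> = inf y (c x)" by (simp only: x[symmetric])
  finally have y_ca: "inf y (c ?a) = inf y (c x)" .
  have "y = sup ?a (inf y (c ?a))"
    by (rule orthomodular_law[OF a assms(2)]) simp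
  moreover have "inf y (c ?a) \<in> Sh c"
    by (rule inf_compl_Sh[OF a assms(2)]) simp
  ultimately show ?thesis
    unfolding commute_Sh_iff[OF assms(2)] inf_commute[of y x] y_ca[symmetric]
    using a by blast
qed

end

global_interpretation Join: semilattice_order_neutr_set sup "bot :: 'a::bounded_semilattice_sup_bot" "(\<ge>)" "(>)"
  defines Join = Join.F ..

locale orthogonal_decomposition = super_paraorthomodular_lattice +
  fixes A :: "'a::bounded_lattice set"
  assumes finite_decomposition: "finite A"
    and decomposition_Sh: "A \<subseteq> Sh c"
    and decomposition_orthogonal: "\<And>u v. u \<in> A \<Longrightarrow> v \<in> A \<Longrightarrow> u \<noteq> v \<Longrightarrow> u \<le> c v"
    and Join_decomposition: "Join A = top"
begin

lemma finite_subset_decomposition: "P \<subseteq> A \<Longrightarrow> finite P"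
  using finite_decomposition finite_subset by blast

lemma Join_le_compl_Join:
  assumes "P \<subseteq> A" "Q \<subseteq> A" "P \<inter> Q = {}"
  shows "Join P \<le> c (Join Q)"
proof -
  have "Join Q \<le> c u" if "u \<in> P" for u
    using that assms
    by (auto simp: Join.bounded_iff finite_subset_decomposition intro!: decomposition_orthogonal)
  then have "u \<le> c (Join Q)" if "u \<in> P" for u
    using that le_compl_iff_le_compl by blast
  then show ?thesis by (simp add: Join.bounded_iff finite_subset_decomposition assms(1))
qed

lemma Join_Sh:
  assumes "P \<subseteq> A"
  shows "Join P \<in> Sh c"
  using finite_subset_decomposition[OF assms] assms
proof (induction P rule: finite_subset_induct')
  case empty
  then show ?case by (simp add: Sh_def)
next
  case (insert u P)
  have "u \<le> c (Join P)"
    using Join_le_compl_Join[of "{u}" P] insert by simp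
  then show ?case
    using insert decomposition_Sh sup_Sh_of_orthogonal by auto
qed

lemma sup_Join: "P \<subseteq> A \<Longrightarrow> Q \<subseteq> A \<Longrightarrow> sup (Join P) (Join Q) = Join (P \<union> Q)"
  by (simp add: Join.union finite_subset_decomposition)

lemma compl_Join:
  assumes "P \<subseteq> A"
  shows "c (Join P) = Join (A - P)"
proof -
  have "Join (A - P) \<le> c (Join P)"
    using assms by (intro Join_le_compl_Join) auto
  moreover have "sup (Join (A - P)) (Join P) = top"
    using assms Join_decomposition by (simp add: sup_Join Un_absorb2)
  then have "inf (c (Join (A - P))) (c (Join P)) = bot"
    by (metis compl_sup compl_top)
  ultimately have "Join (A - P) = c (Join P)"
    by (rule Sh_eq_of_le[OF Join_Sh[OF Diff_subset] Sh_compl[OF Join_Sh[OF assms]]])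
  then show ?thesis ..
qed

lemma inf_Join:
  assumes "P \<subseteq> A" "Q \<subseteq> A"
  shows "inf (Join P) (Join Q) = Join (P \<inter> Q)"
proof -
  have "inf (Join P) (Join Q) = c (sup (c (Join P)) (c (Join Q)))" by simp
  also have "\<dots> = c (Join (A - P \<inter> Q))"
    using assms by (simp add: compl_Join Join.union finite_subset_decomposition Diff_Int)
  also have "\<dots> = Join (P \<inter> Q)"
    using assms by (simp add: compl_Join Diff_Diff_Int inf.absorb2 le_infI1)
  finally show ?thesis .
qed

lemma subalgebra_Joins: "subalgebra c (Join ` Pow A)"
  unfolding subalgebra_def
proof (intro conjI ballI)
  show "bot \<in> Join ` Pow A" by (rule image_eqI[where x = "{}"]) simp_all
  show "top \<in> Join ` Pow A" by (rule image_eqI[where x = A]) (simp_all add: Join_decomposition)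
next
  fix u v assume "u \<in> Join ` Pow A" "v \<in> Join ` Pow A"
  then obtain P Q where "P \<subseteq> A" "Q \<subseteq> A" "u = Join P" "v = Join Q" by blast
  then show "inf u v \<in> Join ` Pow A" "sup u v \<in> Join ` Pow A"
    by (auto simp: inf_Join sup_Join intro!: imageI)
next
  fix u assume "u \<in> Join ` Pow A"
  then show "c u \<in> Join ` Pow A" by (auto simp: compl_Join)
qed

lemma boolean_subalgebra_Joins: "boolean_subalgebra c (Join ` Pow A)"
  unfolding boolean_subalgebra_def
proof (intro conjI ballI subalgebra_Joins)
  show "distributive_on (Join ` Pow A)"
    unfolding distributive_on_def
  proof (intro ballI)
    fix u v w assume "u \<in> Join ` Pow A" "v \<in> Join ` Pow A" "w \<in> Join ` Pow A"
    then obtain P Q R where "P \<subseteq> A" "Q \<subseteq> A" "R \<subseteq> A"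
      and "u = Join P" "v = Join Q" "w = Join R" by blast
    then show "inf u (sup v w) = sup (inf u v) (inf u w)"
      by (simp add: inf_Join sup_Join Int_Un_distrib le_infI1)
  qed
next
  fix u assume "u \<in> Join ` Pow A"
  then show "inf u (c u) = bot" using Join_Sh by (auto simp: Sh_def)
qed

end

context super_paraorthomodular_lattice
begin

lemma orthogonal_decomposition_of_commute_Sh:
  assumes "x \<in> Sh c" and y: "y \<in> Sh c" and "commute_Sh c x y"
  shows "orthogonal_decomposition c {inf x y, inf x (c y), inf y (c x), inf (c y) (c x)}"
proof -
  have "commute_Sh c y x" and "commute_Sh c (c y) x"
    using assms commute_Sh_sym commute_Sh_compl Sh_compl by blast+
  then have xy: "inf x y \<in> Sh c" "inf x (c y) \<in> Sh c"
    and yx: "inf y (c x) \<in> Sh c" "y = sup (inf y x) (inf y (c x))"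
    and cyx: "inf (c y) (c x) \<in> Sh c" "c y = sup (inf (c y) x) (inf (c y) (c x))"
    using assms commute_Sh_iff Sh_compl by blast+
  have "top = sup y (c y)" using y by (simp add: sup_compl_Sh)
  also have "\<dots> = sup (sup (inf y x) (inf y (c x))) (sup (inf (c y) x) (inf (c y) (c x)))"
    using yx(2) cyx(2) by (rule arg_cong2[where f = sup])
  also have "\<dots> = Join {inf x y, inf x (c y), inf y (c x), inf (c y) (c x)}"
    by (simp add: inf_commute sup_aci)
  finally show ?thesis
    using xy yx(1) cyx(1) by unfold_locales (auto simp: le_supI1 le_supI2)
qed

lemma boolean_subalgebra_Sg_of_commute_Sh:
  assumes "x \<in> Sh c" and y: "y \<in> Sh c" and "commute_Sh c x y"
  shows "boolean_subalgebra c (Sg c {x, y})"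
proof -
  let ?A = "{inf x y, inf x (c y), inf y (c x), inf (c y) (c x)}"
  interpret orthogonal_decomposition c ?A
    by (rule orthogonal_decomposition_of_commute_Sh) fact+
  have "x = sup (inf x y) (inf x (c y))" using assms commute_Sh_iff by blast
  then have x_Join: "x = Join {inf x y, inf x (c y)}" by simp
  have "commute_Sh c y x" using assms by (rule commute_Sh_sym)
  then have "y = sup (inf y x) (inf y (c x))" using y commute_Sh_iff by blast
  then have y_Join: "y = Join {inf x y, inf y (c x)}" by (simp add: inf_commute)
  have "{x, y} \<subseteq> Join ` Pow ?A" using x_Join y_Join by blast
  then have "Sg c {x, y} \<subseteq> Join ` Pow ?A"
    by (rule Sg_minimal[OF subalgebra_Joins])
  then show ?thesis
    by (rule boolean_subalgebra_subset[OF boolean_subalgebra_Joins subalgebra_Sg])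
qed

end

theorem corollary4p6:
  fixes c :: "'a::bounded_lattice \<Rightarrow> 'a" and x y :: 'a
  assumes "super_paraorthomodular c"
    and "x \<in> Sh c" and "y \<in> Sh c"
  shows "(distributive_on (Sg c {x, y}) \<longleftrightarrow> commute_Sh c x y) \<and>
         (commute_Sh c x y \<longrightarrow> boolean_subalgebra c (Sg c {x, y}))"
proof -
  interpret super_paraorthomodular_lattice c
    by unfold_locales (fact assms(1))
  have "commute_Sh c x y \<Longrightarrow> boolean_subalgebra c (Sg c {x, y})"
    using assms(2,3) by (rule boolean_subalgebra_Sg_of_commute_Sh)
  moreover have "distributive_on (Sg c {x, y}) \<Longrightarrow> commute_Sh c x y"
    using assms(2,3) by (rule commute_Sh_of_distributive)
  ultimately show ?thesis unfolding boolean_subalgebra_def by blast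
qed

end
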